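(* Let $G$ be a connected triangle-free graph of order $n$, minimum degree $\delta \geq 3$ and maximum degree $\Delta$, and let $N=n-\Delta+\delta$. Then \[ \mu(G) \leq \frac{2}{3}\cdot\frac{N(N-1)}{n(n-1)}\cdot\frac{n+2\Delta}{\delta} + 7 . \]
   Context: A graph is triangle-free if it contains no $K_3$ as a subgraph. For a connected graph $G$ of order $n\ge2$, $W(G)=\sum_{\{u,v\}\subseteq V(G)} d_G(u,v)$ is the Wiener index (sum of shortest-path distances over unordered pairs of distinct vertices) and $\mu(G)=\binom{n}{2}^{-1}W(G)$ is the average distance. *)

theory Defs
  imports Complex_Main
begin

definition simple_graph :: "'a set \<Rightarrow> ('a \<Rightarrow> 'a \<Rightarrow> bool) \<Rightarrow> bool" where
  "simple_graph V E \<longleftrightarrow> finite V \<and> (\<forall>u v. E u v \<longrightarrow> u \<in> V \<and> v \<in> V)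
      \<and> (\<forall>u v. E u v \<longrightarrow> E v u) \<and> (\<forall>v. \<not> E v v)"

fun is_walk :: "'a set \<Rightarrow> ('a \<Rightarrow> 'a \<Rightarrow> bool) \<Rightarrow> 'a list \<Rightarrow> bool" where
  "is_walk V E [] = False"
| "is_walk V E [v] = (v \<in> V)"
| "is_walk V E (u # v # xs) = (u \<in> V \<and> E u v \<and> is_walk V E (v # xs))"

definition walk_between :: "'a set \<Rightarrow> ('a \<Rightarrow> 'a \<Rightarrow> bool) \<Rightarrow> 'a \<Rightarrow> 'a \<Rightarrow> 'a list \<Rightarrow> bool" where
  "walk_between V E u v xs \<longleftrightarrow> is_walk V E xs \<and> hd xs = u \<and> last xs = v"

definition graph_connected :: "'a set \<Rightarrow> ('a \<Rightarrow> 'a \<Rightarrow> bool) \<Rightarrow> bool" where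
  "graph_connected V E \<longleftrightarrow> (\<forall>u\<in>V. \<forall>v\<in>V. \<exists>xs. walk_between V E u v xs)"

definition gdist :: "'a set \<Rightarrow> ('a \<Rightarrow> 'a \<Rightarrow> bool) \<Rightarrow> 'a \<Rightarrow> 'a \<Rightarrow> nat" where
  "gdist V E u v = (LEAST k. \<exists>xs. walk_between V E u v xs \<and> length xs = Suc k)"

definition degree :: "'a set \<Rightarrow> ('a \<Rightarrow> 'a \<Rightarrow> bool) \<Rightarrow> 'a \<Rightarrow> nat" where
  "degree V E v = card {u \<in> V. E v u}"

definition min_degree :: "'a set \<Rightarrow> ('a \<Rightarrow> 'a \<Rightarrow> bool) \<Rightarrow> nat" where
  "min_degree V E = Min (degree V E ` V)"

definition max_degree :: "'a set \<Rightarrow> ('a \<Rightarrow> 'a \<Rightarrow> bool) \<Rightarrow> nat" where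
  "max_degree V E = Max (degree V E ` V)"

definition triangle_free :: "'a set \<Rightarrow> ('a \<Rightarrow> 'a \<Rightarrow> bool) \<Rightarrow> bool" where
  "triangle_free V E \<longleftrightarrow> \<not> (\<exists>a\<in>V. \<exists>b\<in>V. \<exists>c\<in>V. E a b \<and> E b c \<and> E a c)"

text \<open>Wiener index: sum of distances over unordered pairs of distinct vertices.\<close>
definition wiener :: "'a set \<Rightarrow> ('a \<Rightarrow> 'a \<Rightarrow> bool) \<Rightarrow> nat" where
  "wiener V E = (\<Sum>p\<in>{{u, v} | u v. u \<in> V \<and> v \<in> V \<and> u \<noteq> v}.
      gdist V E (SOME u. u \<in> p) (SOME v. v \<in> p \<and> v \<noteq> (SOME u. u \<in> p)))"

definition avg_dist :: "'a set \<Rightarrow> ('a \<Rightarrow> 'a \<Rightarrow> bool) \<Rightarrow> real" where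
  "avg_dist V E = real (wiener V E) / real (card V choose 2)"

end

theory Submission
  imports Defs
begin

text \<open>Fix an ordered pair \<open>(u, w)\<close> at distance \<open>D\<close> and a shortest \<open>u\<close>--\<open>w\<close> path.
  The neighbourhoods of its vertices at positions \<open>4, 5, 8, 9, 12, 13, \<dots>\<close> (away from both
  ends) are pairwise disjoint: consecutive vertices have no common neighbour by
  triangle-freeness, and vertices three apart have none because their distance is \<open>3\<close>.
  Each neighbour \<open>z\<close> found this way is a detour vertex: \<open>d(u,z), d(z,w) \<ge> 3\<close> and
  \<open>d(u,z) + d(z,w) \<le> D + 2\<close>. Hence \<open>\<delta> D \<le> 2 |Z(u,w)| + 7 \<delta>\<close>.
  Summing over all ordered pairs bounds \<open>2 \<delta> W\<close> by twice the number of triples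
  \<open>(u, z, w)\<close> with \<open>z \<in> Z(u,w)\<close>, plus \<open>7 \<delta> n (n - 1)\<close>. Such a triple has pairwise distances
  at least \<open>3\<close>, and its two cyclic rotations are never such triples, so there are at most
  a third as many as triples with pairwise distances \<open>\<ge> 3\<close>. The closed neighbourhood of a
  vertex of maximum degree has diameter \<open>2\<close>, so such a triple has at most one entry in it,
  which leaves at most \<open>m\<^sup>3 + 3 (\<Delta> + 1) m\<^sup>2\<close> triples, \<open>m = n - \<Delta> - 1\<close>.\<close>

definition has_walk :: "'a set \<Rightarrow> ('a \<Rightarrow> 'a \<Rightarrow> bool) \<Rightarrow> nat \<Rightarrow> 'a \<Rightarrow> 'a \<Rightarrow> bool" where
  "has_walk V E k u v \<longleftrightarrow>
     (\<exists>p. p 0 = u \<and> p k = v \<and> (\<forall>i\<le>k. p i \<in> V) \<and> (\<forall>i<k. E (p i) (p (Suc i))))"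

lemma is_walk_iff_nth:
  "is_walk V E xs \<longleftrightarrow>
     xs \<noteq> [] \<and> (\<forall>i<length xs. xs ! i \<in> V) \<and> (\<forall>i. Suc i < length xs \<longrightarrow> E (xs ! i) (xs ! Suc i))"
  by (induction V E xs rule: is_walk.induct)
     (auto simp: nth_Cons less_Suc_eq_0_disj split: nat.splits)

lemma walk_between_length_iff_has_walk:
  "(\<exists>xs. walk_between V E u v xs \<and> length xs = Suc k) \<longleftrightarrow> has_walk V E k u v"
proof
  assume "\<exists>xs. walk_between V E u v xs \<and> length xs = Suc k"
  then obtain xs where xs: "is_walk V E xs" "hd xs = u" "last xs = v" "length xs = Suc k"
    unfolding walk_between_def by blast
  then have "xs \<noteq> []" by auto
  with xs show "has_walk V E k u v"
    unfolding has_walk_def is_walk_iff_nth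
    by (intro exI[of _ "(!) xs"]) (auto simp: hd_conv_nth last_conv_nth)
next
  assume "has_walk V E k u v"
  then obtain p where "p 0 = u" "p k = v" "\<forall>i\<le>k. p i \<in> V" "\<forall>i<k. E (p i) (p (Suc i))"
    unfolding has_walk_def by blast
  then have "walk_between V E u v (map p [0..<Suc k])"
    unfolding walk_between_def is_walk_iff_nth by (auto simp: hd_map last_map simp del: upt_Suc)
  then show "\<exists>xs. walk_between V E u v xs \<and> length xs = Suc k" by fastforce
qed

lemma gdist_eq_Least_has_walk: "gdist V E u v = (LEAST k. has_walk V E k u v)"
  unfolding gdist_def walk_between_length_iff_has_walk ..

lemma has_walk_append:
  assumes "has_walk V E a u v" "has_walk V E b v w"
  shows "has_walk V E (a + b) u w"
proof -
  obtain p where p: "p 0 = u" "p a = v" "\<forall>i\<le>a. p i \<in> V" "\<forall>i<a. E (p i) (p (Suc i))"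
    using assms(1) unfolding has_walk_def by blast
  obtain q where q: "q 0 = v" "q b = w" "\<forall>i\<le>b. q i \<in> V" "\<forall>i<b. E (q i) (q (Suc i))"
    using assms(2) unfolding has_walk_def by blast
  define r where "r i = (if i \<le> a then p i else q (i - a))" for i
  have "E (r i) (r (Suc i))" if "i < a + b" for i
  proof (cases "i < a")
    case False
    then have "Suc i - a = Suc (i - a)" by simp
    with False that p(2) q(1,4) show ?thesis by (auto simp: r_def)
  qed (use p(4) in \<open>auto simp: r_def\<close>)
  moreover have "r 0 = u" "r (a + b) = w" "\<forall>i\<le>a + b. r i \<in> V"
    using p q by (auto simp: r_def)
  ultimately show ?thesis unfolding has_walk_def by blast
qed

lemma has_walk_from_to:
  assumes "\<forall>i\<le>k. p i \<in> V" "\<forall>i<k. E (p i) (p (Suc i))" "i \<le> j" "j \<le> k"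
  shows "has_walk V E (j - i) (p i) (p j)"
  unfolding has_walk_def using assms by (intro exI[of _ "\<lambda>t. p (i + t)"]) auto

definition spaced_index :: "nat \<Rightarrow> nat" where
  "spaced_index k = 4 * (k div 2) + 4 + k mod 2"

lemma spaced_index_le: "spaced_index k \<le> 2 * k + 4"
  unfolding spaced_index_def using div_mult_mod_eq[of k 2] by linarith

lemma spaced_index_gap:
  assumes "k < k'"
  shows "spaced_index k' = Suc (spaced_index k) \<or> spaced_index k + 3 \<le> spaced_index k'"
proof (cases "k div 2 = k' div 2")
  case True
  with assms have "k mod 2 = 0" "k' mod 2 = 1" by presburger+
  with True show ?thesis unfolding spaced_index_def by simp
next
  case False
  with assms have "k div 2 < k' div 2" using div_le_mono le_eq_less_or_eq by auto
  then show ?thesis unfolding spaced_index_def using mod_less_divisor[of 2 k] by linarith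
qed

lemma cubic_le_product:
  fixes m D \<delta> :: nat
  assumes "3 \<le> \<delta>"
  shows "m\<^sup>2 * (m + 3 * D + 3) \<le> (m + 1 + \<delta>) * (m + \<delta>) * (m + 3 * D + 1)"
proof -
  have "m\<^sup>2 * (m + 3 * D + 3) \<le> (m + 4) * (m + 3) * (m + 3 * D + 1)"
    by (simp add: algebra_simps power2_eq_square)
  also have "\<dots> \<le> (m + 1 + \<delta>) * (m + \<delta>) * (m + 3 * D + 1)"
    using assms by (intro mult_le_mono) auto
  finally show ?thesis .
qed

lemma avg_dist_eq:
  assumes "2 \<le> card V"
  shows "avg_dist V E = 2 * real (wiener V E) / (real (card V) * (real (card V) - 1))"
proof -
  have "real (card V choose 2) = real (card V) * (real (card V) - 1) / 2"
    using assms by (simp add: choose_two real_of_nat_div)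
  then show ?thesis unfolding avg_dist_def by (metis divide_divide_eq_right mult.commute)
qed

definition neighbours :: "'a set \<Rightarrow> ('a \<Rightarrow> 'a \<Rightarrow> bool) \<Rightarrow> 'a \<Rightarrow> 'a set" where
  "neighbours V E v = {u \<in> V. E v u}"

lemma card_neighbours: "card (neighbours V E v) = degree V E v"
  unfolding neighbours_def degree_def ..

definition rotate3 :: "'a \<times> 'a \<times> 'a \<Rightarrow> 'a \<times> 'a \<times> 'a" where
  "rotate3 = (\<lambda>(a, b, c). (b, c, a))"

lemma inj_rotate3: "inj rotate3"
  unfolding rotate3_def inj_def by auto

locale connected_simple_graph =
  fixes V :: "'a set" and E :: "'a \<Rightarrow> 'a \<Rightarrow> bool"
  assumes simple: "simple_graph V E" and connected: "graph_connected V E"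
begin

abbreviation "d \<equiv> gdist V E"

lemma finite_V: "finite V"
  and edge_in_V: "E u v \<Longrightarrow> u \<in> V \<and> v \<in> V"
  and edge_sym: "E u v \<Longrightarrow> E v u"
  and edge_irrefl: "\<not> E v v"
  using simple unfolding simple_graph_def by blast+

lemma has_walk_rev:
  assumes "has_walk V E k u v"
  shows "has_walk V E k v u"
proof -
  obtain p where p: "p 0 = u" "p k = v" "\<forall>i\<le>k. p i \<in> V" "\<forall>i<k. E (p i) (p (Suc i))"
    using assms unfolding has_walk_def by blast
  have "E (p (k - i)) (p (k - Suc i))" if "i < k" for i
  proof -
    have "E (p (k - Suc i)) (p (Suc (k - Suc i)))" using p(4) that by simp
    moreover have "Suc (k - Suc i) = k - i" using that by simp
    ultimately show ?thesis using edge_sym by metis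
  qed
  with p show ?thesis unfolding has_walk_def by (intro exI[of _ "\<lambda>i. p (k - i)"]) auto
qed

lemma has_walk_gdist:
  assumes "u \<in> V" "v \<in> V"
  shows "has_walk V E (d u v) u v"
proof -
  obtain xs where xs: "walk_between V E u v xs"
    using connected assms unfolding graph_connected_def by blast
  then have "xs \<noteq> []" unfolding walk_between_def by auto
  with xs have "has_walk V E (length xs - 1) u v"
    using walk_between_length_iff_has_walk[of V E u v "length xs - 1"] by auto
  then show ?thesis unfolding gdist_eq_Least_has_walk by (rule LeastI)
qed

lemma gdist_le: "has_walk V E k u v \<Longrightarrow> d u v \<le> k"
  unfolding gdist_eq_Least_has_walk by (rule Least_le)

lemma gdist_sym: "u \<in> V \<Longrightarrow> v \<in> V \<Longrightarrow> d u v = d v u"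
  using gdist_le[OF has_walk_rev[OF has_walk_gdist]] by (metis le_antisym)

lemma gdist_triangle: "u \<in> V \<Longrightarrow> v \<in> V \<Longrightarrow> w \<in> V \<Longrightarrow> d u w \<le> d u v + d v w"
  by (intro gdist_le has_walk_append[OF has_walk_gdist has_walk_gdist])

lemma gdist_self: "u \<in> V \<Longrightarrow> d u u = 0"
  using gdist_le[of 0 u u] unfolding has_walk_def by fastforce

lemma gdist_edge:
  assumes "E u v"
  shows "d u v \<le> 1"
proof (rule gdist_le)
  show "has_walk V E 1 u v"
    unfolding has_walk_def using assms edge_in_V[OF assms]
    by (intro exI[of _ "\<lambda>i. if i = 0 then u else v"]) auto
qed

lemma geodesic:
  assumes "u \<in> V" "w \<in> V"
  obtains p where "p 0 = u" "p (d u w) = w" "\<forall>i\<le>d u w. p i \<in> V"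
    "\<forall>i<d u w. E (p i) (p (Suc i))" "\<And>i j. i \<le> j \<Longrightarrow> j \<le> d u w \<Longrightarrow> d (p i) (p j) = j - i"
proof -
  obtain p where p: "p 0 = u" "p (d u w) = w" "\<forall>i\<le>d u w. p i \<in> V" "\<forall>i<d u w. E (p i) (p (Suc i))"
    using has_walk_gdist[OF assms] unfolding has_walk_def by blast
  have "d (p i) (p j) = j - i" if ij: "i \<le> j" "j \<le> d u w" for i j
  proof -
    have walks: "d (p i') (p j') \<le> j' - i'" if "i' \<le> j'" "j' \<le> d u w" for i' j'
      using gdist_le[OF has_walk_from_to[OF p(3,4) that]] .
    have V: "p i \<in> V" "p j \<in> V" using p(3) ij by auto
    have "d u w \<le> d u (p i) + d (p i) w" by (rule gdist_triangle[OF assms(1) V(1) assms(2)])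
    also have "d (p i) w \<le> d (p i) (p j) + d (p j) w" by (rule gdist_triangle[OF V assms(2)])
    finally show ?thesis using walks[OF ij] walks[of 0 i] walks[of j "d u w"] ij p(1,2) by simp
  qed
  with p that show ?thesis by blast
qed

lemma min_degree_le_degree: "v \<in> V \<Longrightarrow> min_degree V E \<le> degree V E v"
  unfolding min_degree_def using finite_V by (intro Min_le) auto

lemma gdist_common_neighbour:
  assumes "E x z" "E y z"
  shows "d x y \<le> 2"
proof -
  have "x \<in> V" "y \<in> V" "z \<in> V" using assms edge_in_V by blast+
  then have "d x y \<le> d x z + d z y" using gdist_triangle by blast
  with gdist_edge[OF assms(1)] gdist_edge[OF edge_sym[OF assms(2)]] show ?thesis by linarith
qed

lemma neighbours_disjoint:
  assumes "triangle_free V E" "E x y \<or> 3 \<le> d x y"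
  shows "neighbours V E x \<inter> neighbours V E y = {}"
proof (rule ccontr)
  assume "neighbours V E x \<inter> neighbours V E y \<noteq> {}"
  then obtain z where z: "z \<in> V" "E x z" "E y z" unfolding neighbours_def by blast
  show False
    using assms(2)
  proof
    assume "E x y"
    with z assms(1) edge_in_V show False unfolding triangle_free_def by blast
  next
    assume "3 \<le> d x y"
    with gdist_common_neighbour[OF z(2,3)] show False by linarith
  qed
qed

definition detours :: "'a \<Rightarrow> 'a \<Rightarrow> 'a set" where
  "detours u w = {z \<in> V. 3 \<le> d u z \<and> 3 \<le> d z w \<and> d u z + d z w \<le> d u w + 2}"

lemma finite_detours: "finite (detours u w)"
  using finite_V unfolding detours_def by simp

lemma neighbours_subset_detours:
  assumes "u \<in> V" "x \<in> V" "w \<in> V" "d u x + d x w = d u w" "4 \<le> d u x" "4 \<le> d x w"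
  shows "neighbours V E x \<subseteq> detours u w"
proof
  fix z assume "z \<in> neighbours V E x"
  then have z: "z \<in> V" "d x z \<le> 1" "d z x \<le> 1"
    using gdist_edge edge_sym unfolding neighbours_def by blast+
  have "d u x \<le> d u z + d z x" "d x w \<le> d x z + d z w"
    "d u z \<le> d u x + d x z" "d z w \<le> d z x + d x w"
    using gdist_triangle assms(1-3) z(1) by blast+
  with z assms(4-6) show "z \<in> detours u w" unfolding detours_def by auto
qed

lemma min_degree_mult_gdist_le:
  assumes tf: "triangle_free V E" and u: "u \<in> V" and w: "w \<in> V"
  shows "min_degree V E * d u w \<le> 2 * card (detours u w) + 7 * min_degree V E"
proof -
  obtain p where p: "p 0 = u" "p (d u w) = w" "\<forall>i\<le>d u w. p i \<in> V" "\<forall>i<d u w. E (p i) (p (Suc i))"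
    and pd: "\<And>i j. i \<le> j \<Longrightarrow> j \<le> d u w \<Longrightarrow> d (p i) (p j) = j - i"
    using geodesic[OF u w] by blast
  define K where "K = (d u w - 6) div 2"
  define A where "A k = neighbours V E (p (spaced_index k))" for k
  have index_range: "4 \<le> spaced_index k" "spaced_index k + 4 \<le> d u w" if "k < K" for k
    using that spaced_index_le[of k] unfolding K_def by (auto simp: spaced_index_def)
  have index_in_V: "p (spaced_index k) \<in> V" if "k < K" for k
    using p(3) index_range[OF that] by simp
  have "A k \<subseteq> detours u w" if "k < K" for k
    unfolding A_def using index_range[OF that] pd[of 0] pd[of _ "d u w"] p(1-3)
    by (intro neighbours_subset_detours[OF u _ w]) auto
  then have A_detours: "(\<Union>k<K. A k) \<subseteq> detours u w" by blast
  have A_disjoint: "A k \<inter> A k' = {}" if "k < k'" "k' < K" for k k'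
    unfolding A_def
  proof (intro neighbours_disjoint[OF tf])
    have "spaced_index k < spaced_index k'" "spaced_index k' \<le> d u w"
      using spaced_index_gap[OF that(1)] index_range[OF that(2)] by auto
    then show "E (p (spaced_index k)) (p (spaced_index k')) \<or> 3 \<le> d (p (spaced_index k)) (p (spaced_index k'))"
      using spaced_index_gap[OF that(1)] p(4) pd by auto
  qed
  have "K * min_degree V E = (\<Sum>k<K. min_degree V E)" by simp
  also have "\<dots> \<le> (\<Sum>k<K. card (A k))"
    unfolding A_def card_neighbours using index_in_V by (intro sum_mono min_degree_le_degree) auto
  also have "\<dots> = card (\<Union>k<K. A k)"
    using finite_V A_disjoint
    by (intro card_UN_disjoint[symmetric]) (auto simp: A_def neighbours_def nat_neq_iff)
  also have "\<dots> \<le> card (detours u w)" by (rule card_mono[OF finite_detours A_detours])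
  finally have "K * min_degree V E \<le> card (detours u w)" .
  moreover have "d u w \<le> 2 * K + 7" unfolding K_def by simp
  then have "min_degree V E * d u w \<le> min_degree V E * (2 * K + 7)" by simp
  ultimately show ?thesis by (simp add: algebra_simps)
qed

definition distinct_pairs :: "('a \<times> 'a) set" where
  "distinct_pairs = {(u, w). u \<in> V \<and> w \<in> V \<and> u \<noteq> w}"

lemma finite_distinct_pairs: "finite distinct_pairs"
  using finite_subset[of distinct_pairs "V \<times> V"] finite_V unfolding distinct_pairs_def by auto

lemma card_distinct_pairs: "card distinct_pairs = card V * (card V - 1)"
proof -
  have "distinct_pairs = V \<times> V - (\<lambda>u. (u, u)) ` V" unfolding distinct_pairs_def by auto
  moreover have "card ((\<lambda>u. (u, u)) ` V) = card V" by (rule card_image) (auto simp: inj_on_def)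
  moreover have "(\<lambda>u. (u, u)) ` V \<subseteq> V \<times> V" by auto
  ultimately show ?thesis
    using finite_V by (simp add: card_Diff_subset card_cartesian_product diff_mult_distrib2)
qed

lemma wiener_eq_sum_distinct_pairs: "2 * wiener V E = (\<Sum>(u, w)\<in>distinct_pairs. d u w)"
proof -
  let ?P = "{{u, v} | u v. u \<in> V \<and> v \<in> V \<and> u \<noteq> v}"
  let ?h = "\<lambda>(u, w). {u, w}"
  have chosen_dist: "d (SOME x. x \<in> {u, w}) (SOME y. y \<in> {u, w} \<and> y \<noteq> (SOME x. x \<in> {u, w})) = d u w"
    if "u \<in> V" "w \<in> V" "u \<noteq> w" for u w
  proof -
    define a where "a = (SOME x. x \<in> {u, w})"
    have a: "a \<in> {u, w}" unfolding a_def by (rule someI) auto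
    define b where "b = (SOME y. y \<in> {u, w} \<and> y \<noteq> a)"
    have "b \<in> {u, w} \<and> b \<noteq> a" unfolding b_def by (rule someI_ex) (use a that in auto)
    then have "d a b = d u w" using a gdist_sym that by auto
    then show ?thesis unfolding a_def b_def .
  qed
  have image: "?h ` distinct_pairs = ?P" unfolding distinct_pairs_def by auto
  have fibre: "{x \<in> distinct_pairs. ?h x = {u, w}} = {(u, w), (w, u)}"
    if "(u, w) \<in> distinct_pairs" for u w
    using that unfolding distinct_pairs_def by (auto simp: doubleton_eq_iff)
  have "(\<Sum>(u, w)\<in>distinct_pairs. d u w)
      = (\<Sum>p\<in>?h ` distinct_pairs. \<Sum>(u, w)\<in>{x \<in> distinct_pairs. ?h x = p}. d u w)"
    by (rule sum.image_gen[OF finite_distinct_pairs])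
  also have "\<dots> = (\<Sum>p\<in>?P. 2 * d (SOME x. x \<in> p) (SOME y. y \<in> p \<and> y \<noteq> (SOME x. x \<in> p)))"
    unfolding image[symmetric]
  proof (rule sum.cong[OF refl])
    fix p assume "p \<in> ?h ` distinct_pairs"
    then obtain u w where uw: "(u, w) \<in> distinct_pairs" "p = {u, w}" by auto
    then have "u \<in> V" "w \<in> V" "u \<noteq> w" unfolding distinct_pairs_def by auto
    with uw chosen_dist[OF this] gdist_sym[OF this(1,2)] show "(\<Sum>(u, w)\<in>{x \<in> distinct_pairs. ?h x = p}. d u w)
        = 2 * d (SOME x. x \<in> p) (SOME y. y \<in> p \<and> y \<noteq> (SOME x. x \<in> p))"
      by (simp add: fibre)
  qed
  also have "\<dots> = 2 * wiener V E" unfolding wiener_def by (simp add: sum_distrib_left)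
  finally show ?thesis by simp
qed

definition detour_triples :: "('a \<times> 'a \<times> 'a) set" where
  "detour_triples = {(u, z, w). (u, w) \<in> distinct_pairs \<and> z \<in> detours u w}"

lemma card_detour_triples:
  "card detour_triples = (\<Sum>(u, w)\<in>distinct_pairs. card (detours u w))"
proof -
  let ?f = "\<lambda>((u, w), z). (u, z, w)"
  have "detour_triples = ?f ` Sigma distinct_pairs (\<lambda>(u, w). detours u w)"
    unfolding detour_triples_def by force
  moreover have "inj_on ?f (Sigma distinct_pairs (\<lambda>(u, w). detours u w))"
    by (auto simp: inj_on_def)
  ultimately have "card detour_triples = card (Sigma distinct_pairs (\<lambda>(u, w). detours u w))"
    by (simp add: card_image)
  also have "\<dots> = (\<Sum>(u, w)\<in>distinct_pairs. card (detours u w))"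
    using finite_distinct_pairs finite_detours by (simp add: split_def)
  finally show ?thesis .
qed

definition far_triples :: "('a \<times> 'a \<times> 'a) set" where
  "far_triples = {(a, b, c). a \<in> V \<and> b \<in> V \<and> c \<in> V \<and> 3 \<le> d a b \<and> 3 \<le> d b c \<and> 3 \<le> d c a}"

lemma detour_triples_subset_far_triples: "detour_triples \<subseteq> far_triples"
proof
  fix x assume "x \<in> detour_triples"
  then obtain a b c where x: "x = (a, b, c)" "(a, c) \<in> distinct_pairs" "b \<in> detours a c"
    unfolding detour_triples_def by auto
  then have "a \<in> V" "b \<in> V" "c \<in> V" "d c a = d a c"
    using gdist_sym unfolding distinct_pairs_def detours_def by auto
  with x show "x \<in> far_triples" unfolding far_triples_def detours_def by auto
qed

lemma rotate3_far_triples: "rotate3 ` far_triples \<subseteq> far_triples"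
  unfolding far_triples_def rotate3_def by auto

lemma detour_triples_disjoint_rotate3: "detour_triples \<inter> rotate3 ` detour_triples = {}"
proof (rule ccontr)
  assume "detour_triples \<inter> rotate3 ` detour_triples \<noteq> {}"
  then obtain u z w where "(u, z, w) \<in> detour_triples" "(w, u, z) \<in> detour_triples"
    unfolding rotate3_def by auto
  then have "3 \<le> d u z" "d u z + d z w \<le> d u w + 2" "d w u + d u z \<le> d w z + 2"
    "d w u = d u w" "d w z = d z w"
    using gdist_sym unfolding detour_triples_def distinct_pairs_def detours_def by auto
  then show False by linarith
qed

lemma detour_triples_disjoint_rotate3_rotate3:
  "detour_triples \<inter> rotate3 ` rotate3 ` detour_triples = {}"
proof (rule ccontr)
  assume "detour_triples \<inter> rotate3 ` rotate3 ` detour_triples \<noteq> {}"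
  then obtain u z w where "(u, z, w) \<in> detour_triples" "(z, w, u) \<in> detour_triples"
    unfolding rotate3_def by auto
  then have "3 \<le> d z w" "d u z + d z w \<le> d u w + 2" "d z w + d w u \<le> d z u + 2"
    "d w u = d u w" "d z u = d u z"
    using gdist_sym unfolding detour_triples_def distinct_pairs_def detours_def by auto
  then show False by linarith
qed

lemma three_card_detour_triples_le: "3 * card detour_triples \<le> card far_triples"
proof -
  let ?S = detour_triples and ?r = rotate3
  have finite: "finite far_triples"
    using finite_subset[of far_triples "V \<times> V \<times> V"] finite_V unfolding far_triples_def by auto
  then have "finite ?S" using detour_triples_subset_far_triples finite_subset by blast
  moreover have "?r ` ?S \<inter> ?r ` ?r ` ?S = {}"
    using detour_triples_disjoint_rotate3 inj_rotate3 by (metis image_Int image_empty)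
  ultimately have "card (?S \<union> ?r ` ?S \<union> ?r ` ?r ` ?S) = card ?S + card (?r ` ?S) + card (?r ` ?r ` ?S)"
    using detour_triples_disjoint_rotate3 detour_triples_disjoint_rotate3_rotate3
    by (simp add: card_Un_disjoint Int_Un_distrib2)
  also have "\<dots> = 3 * card ?S"
  proof -
    have "card (?r ` A) = card A" for A :: "('a \<times> 'a \<times> 'a) set"
      by (rule card_image[OF inj_on_subset[OF inj_rotate3 subset_UNIV]])
    then show ?thesis by simp
  qed
  finally have "3 * card ?S = card (?S \<union> ?r ` ?S \<union> ?r ` ?r ` ?S)" by simp
  also have "\<dots> \<le> card far_triples"
    using detour_triples_subset_far_triples rotate3_far_triples
    by (intro card_mono[OF finite]) blast
  finally show ?thesis .
qed

lemma degree_less_card: "v \<in> V \<Longrightarrow> degree V E v < card V"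
  unfolding degree_def using finite_V edge_irrefl by (intro psubset_card_mono) auto

lemma card_far_triples_le:
  assumes v: "v \<in> V"
  defines "m \<equiv> card V - (degree V E v + 1)"
  shows "card far_triples \<le> m ^ 3 + 3 * (degree V E v + 1) * m ^ 2"
proof -
  define X where "X = insert v (neighbours V E v)"
  define Y where "Y = V - X"
  have XV: "X \<subseteq> V" using v unfolding X_def neighbours_def by auto
  have finite: "finite X" "finite Y" using XV finite_V finite_subset unfolding Y_def by auto
  have card_X: "card X = degree V E v + 1"
    unfolding X_def card_neighbours[symmetric] using finite_V edge_irrefl
    by (subst card_insert_disjoint) (auto simp: neighbours_def)
  have card_Y: "card Y = m"
    unfolding Y_def m_def using card_Diff_subset[OF finite(1) XV] card_X by simp
  have close: "d x y \<le> 2" if "x \<in> X" "y \<in> X" for x y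
  proof -
    have to_v: "d x v \<le> 1" "d v x \<le> 1" if "x \<in> X" for x
      using that v gdist_self gdist_edge edge_sym unfolding X_def neighbours_def by fastforce+
    have "d x y \<le> d x v + d v y" using gdist_triangle v XV that by auto
    with to_v that show ?thesis by fastforce
  qed
  have "far_triples \<subseteq> (Y \<times> Y \<times> Y) \<union> (X \<times> Y \<times> Y) \<union> (Y \<times> X \<times> Y) \<union> (Y \<times> Y \<times> X)"
    using close unfolding far_triples_def Y_def by fastforce
  then have "card far_triples \<le> card ((Y \<times> Y \<times> Y) \<union> (X \<times> Y \<times> Y) \<union> (Y \<times> X \<times> Y) \<union> (Y \<times> Y \<times> X))"
    using finite by (intro card_mono) auto
  also have "\<dots> \<le> card (Y \<times> Y \<times> Y) + card (X \<times> Y \<times> Y) + card (Y \<times> X \<times> Y) + card (Y \<times> Y \<times> X)"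
    by (meson card_Un_le add_right_mono order_trans)
  also have "\<dots> = m ^ 3 + 3 * (degree V E v + 1) * m ^ 2"
    by (simp add: card_cartesian_product card_X card_Y power2_eq_square power3_eq_cube algebra_simps)
  finally show ?thesis .
qed

lemma max_degree_attained:
  assumes "V \<noteq> {}"
  obtains v where "v \<in> V" "degree V E v = max_degree V E"
proof -
  have "max_degree V E \<in> degree V E ` V"
    unfolding max_degree_def using finite_V assms by (intro Max_in) auto
  with that show ?thesis by (metis imageE)
qed

lemma min_degree_mult_wiener_le:
  assumes "triangle_free V E"
  shows "min_degree V E * (2 * wiener V E)
    \<le> 2 * card detour_triples + 7 * min_degree V E * (card V * (card V - 1))"
proof -
  have "min_degree V E * (2 * wiener V E) = (\<Sum>(u, w)\<in>distinct_pairs. min_degree V E * d u w)"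
    unfolding wiener_eq_sum_distinct_pairs by (simp add: sum_distrib_left split_def)
  also have "\<dots> \<le> (\<Sum>(u, w)\<in>distinct_pairs. 2 * card (detours u w) + 7 * min_degree V E)"
    using min_degree_mult_gdist_le[OF assms] by (intro sum_mono) (auto simp: distinct_pairs_def)
  also have "\<dots> = 2 * card detour_triples + 7 * min_degree V E * (card V * (card V - 1))"
    by (simp add: sum.distrib sum_distrib_left split_def card_detour_triples card_distinct_pairs)
  finally show ?thesis .
qed

lemma wiener_bound:
  assumes "triangle_free V E" "3 \<le> min_degree V E" "V \<noteq> {}"
  defines "n \<equiv> card V" and "\<delta> \<equiv> min_degree V E" and "\<Delta> \<equiv> max_degree V E"
  defines "N \<equiv> n - \<Delta> + \<delta>"
  shows "6 * \<delta> * wiener V E \<le> 2 * (N * (N - 1) * (n + 2 * \<Delta>)) + 21 * \<delta> * (n * (n - 1))"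
proof -
  obtain v where v: "v \<in> V" "degree V E v = \<Delta>"
    using max_degree_attained[OF assms(3)] unfolding \<Delta>_def by blast
  define m where "m = n - (\<Delta> + 1)"
  have n: "n = m + \<Delta> + 1" and N: "N = m + 1 + \<delta>"
    using degree_less_card[OF v(1)] v(2) unfolding m_def n_def N_def by auto
  have "m ^ 3 + 3 * (\<Delta> + 1) * m\<^sup>2 = m\<^sup>2 * (m + 3 * \<Delta> + 3)"
    by (simp add: algebra_simps power2_eq_square power3_eq_cube)
  then have "3 * card detour_triples \<le> m\<^sup>2 * (m + 3 * \<Delta> + 3)"
    using three_card_detour_triples_le card_far_triples_le[OF v(1), unfolded v(2), folded n_def, folded m_def]
    by linarith
  also have "\<dots> \<le> (m + 1 + \<delta>) * (m + \<delta>) * (m + 3 * \<Delta> + 1)"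
    using assms(2) unfolding \<delta>_def by (rule cubic_le_product)
  also have "\<dots> = N * (N - 1) * (n + 2 * \<Delta>)"
    unfolding N n by simp
  finally show ?thesis
    using min_degree_mult_wiener_le[OF assms(1)] unfolding \<delta>_def n_def by linarith
qed

end

theorem theorem5p1:
  fixes V :: "'a set" and E :: "'a \<Rightarrow> 'a \<Rightarrow> bool"
  assumes "simple_graph V E"
    and "graph_connected V E"
    and "triangle_free V E"
    and "card V \<ge> 2"
    and "min_degree V E \<ge> 3"
  shows "avg_dist V E \<le>
    2 / 3 * (real (card V - max_degree V E + min_degree V E)
              * (real (card V - max_degree V E + min_degree V E) - 1)
             / (real (card V) * (real (card V) - 1)))
      * ((real (card V) + 2 * real (max_degree V E)) / real (min_degree V E)) + 7"
proof -
  interpret connected_simple_graph V E using assms(1,2) by unfold_locales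
  define n where "n = card V"
  define \<delta> where "\<delta> = min_degree V E"
  define \<Delta> where "\<Delta> = max_degree V E"
  define N where "N = n - \<Delta> + \<delta>"
  have divide_bound: "2 * W / a \<le> 2 / 3 * (x / a) * (z / b) + 7"
    if "0 < a" "0 < b" "6 * b * W \<le> 2 * (x * z) + 21 * b * a" for a b W x z :: real
  proof -
    have "2 * W / a = 6 * b * W / (3 * b * a)" using that by simp
    also have "\<dots> \<le> (2 * (x * z) + 21 * b * a) / (3 * b * a)"
      using that by (intro divide_right_mono) auto
    also have "\<dots> = 2 / 3 * (x / a) * (z / b) + 7" using that by (simp add: field_simps)
    finally show ?thesis .
  qed
  have "6 * \<delta> * wiener V E \<le> 2 * (N * (N - 1) * (n + 2 * \<Delta>)) + 21 * \<delta> * (n * (n - 1))"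
    using wiener_bound[OF assms(3,5)] assms(4) unfolding n_def \<delta>_def \<Delta>_def N_def by fastforce
  then have "real (6 * \<delta> * wiener V E) \<le> real (2 * (N * (N - 1) * (n + 2 * \<Delta>)) + 21 * \<delta> * (n * (n - 1)))"
    by (rule of_nat_mono)
  moreover have "1 \<le> N" "2 \<le> n" "3 \<le> \<delta>" using assms(4,5) unfolding N_def n_def \<delta>_def by auto
  ultimately have "2 * real (wiener V E) / (real n * (real n - 1))
      \<le> 2 / 3 * (real N * (real N - 1) / (real n * (real n - 1))) * ((real n + 2 * real \<Delta>) / real \<delta>) + 7"
    by (intro divide_bound) auto
  then show ?thesis
    unfolding avg_dist_eq[OF assms(4)] N_def n_def \<delta>_def \<Delta>_def .
qed

end
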